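(* In the setting of the context, let $\Lambda$ be a linear relation in the vertex space $\mathcal F$ and $$\Lambda_C=\{(V_CW^{-1}f',\ V_CW^{-1}f):\ (f,f')\in\Lambda\}\subset\mathcal G\oplus\mathcal G.$$ Let $D^{\Lambda_W}$ be the restriction of $D^{max}$ to $\{\Phi\in\widetilde H^1(\mathbf G;\mathbb C^2):(W\Gamma^1\Phi,W\Gamma^2\Phi)\in\Lambda\}$ and $D^{\Lambda_C}$ the restriction of $D^{max}$ to $\{\Phi\in\widetilde H^1(\mathbf G;\mathbb C^2):(\Gamma^1\Phi,\Gamma^2\Phi)\in\Lambda_C\}$. Then $$D^{\Lambda_C}C=-CD^{\Lambda_W}.$$
   Context: Let $m\ge0$. A finite oriented metric graph $\mathbf G$ has a finite nonempty vertex set $\mathcal V$, finite sets $\mathcal I$ (internal) and $\mathcal E$ (external) of edges, $\mathcal J=\mathcal I\cup\mathcal E\ne\emptyset$, no loops. Each internal edge $i$ is identified with $I_i=(a_i,b_i)$, $a_i$ and $b_i$ corresponding to its initial and terminal vertex. An external edge $e$ is identified with $(a_e,+\infty)$ ($\rho(e)=-1$) or $(-\infty,b_e)$ ($\rho(e)=1$), finite endpoint $\partial e$ corresponding to its vertex. $\mathscr H=\bigoplus_jL^2(I_j;\mathbb C^2)$, $\widetilde H^1=\bigoplus_jH^1(I_j;\mathbb C^2)$, $\Phi=(\phi_j)_j$; $D^{max}$ acts edgewise by $-i\sigma_1\phi_j'+m\sigma_3\phi_j$ ($\sigma_1=\begin{pmatrix}0&1\\1&0\end{pmatrix}$, $\sigma_3=\operatorname{diag}(1,-1)$).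 $\mathcal G=\bigoplus_j\mathcal G_j$, $\mathcal G_i=\mathbb C^2$, $\mathcal G_e=\mathbb C$; $\Gamma^k=\bigoplus_j\Gamma^k_j$, $\Gamma^1_i\Phi=(\phi_i^1(a_i),\phi_i^1(b_i))^T$, $\Gamma^2_i\Phi=(i\phi_i^2(a_i),-i\phi_i^2(b_i))^T$, $\Gamma^1_e\Phi=\phi_e^1(\partial e)$, $\Gamma^2_e\Phi=-i\rho(e)\phi^2_e(\partial e)$. Vertex space $\mathcal F=\bigoplus_v\mathbb C^{\deg v}$; coordinates of $\mathcal G$ and $\mathcal F$ are labelled by pairs $(j,v)$, $v$ a vertex endpoint of $j$, ordered in $\mathcal G$ edge by edge (initial vertex first for internal edges) and in $\mathcal F$ vertex by vertex (then by the fixed edge order); $W:\mathcal G\to\mathcal F$ is the permutation matrix sending coordinate $(j,v)$ of $\mathcal G$ to coordinate $(j,v)$ of $\mathcal F$. $C\Phi=(\sigma_1\overline{\phi_j})_j$ (antilinear). $V_C=\bigoplus_jV_{C,j}$ is the antilinear map on $\mathcal G$ with $V_{C,j}\omega_j=i\sigma_3\overline{\omega_j}$ for $j\in\mathcal I$ and $V_{C,j}\omega_j=-i\rho(j)\overline{\omega_j}$ for $j\in\mathcal E$. *)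

theory Defs
  imports "HOL-Analysis.Analysis"
begin

text \<open>Edges are numbered 0..<nE (this numbering is the fixed
edge order), vertices 0..<nV (the fixed vertex order). Edges in intE are internal,
the remaining edges in {..<nE} are external. Internal edge j is (ea j, eb j) with initial
vertex eini j and terminal vertex eter j. External edge j has finite endpoint ec j, vertex
evx j and orientation erho j: (ec j, +inf) if erho j = -1, (-inf, ec j) if erho j = 1.\<close>

record mgraph =
  nE :: nat
  nV :: nat
  intE :: "nat set"
  ea :: "nat \<Rightarrow> real"
  eb :: "nat \<Rightarrow> real"
  eini :: "nat \<Rightarrow> nat"
  eter :: "nat \<Rightarrow> nat"
  ec :: "nat \<Rightarrow> real"
  erho :: "nat \<Rightarrow> real"
  evx :: "nat \<Rightarrow> nat"

definition valid_graph :: "mgraph \<Rightarrow> bool" where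
  "valid_graph G \<longleftrightarrow> 0 < nV G \<and> 0 < nE G \<and> intE G \<subseteq> {..<nE G} \<and>
    (\<forall>j\<in>intE G. ea G j < eb G j \<and> eini G j < nV G \<and> eter G j < nV G \<and> eini G j \<noteq> eter G j) \<and>
    (\<forall>j\<in>{..<nE G} - intE G. evx G j < nV G \<and> (erho G j = -1 \<or> erho G j = 1))"

definition edge_int :: "mgraph \<Rightarrow> nat \<Rightarrow> real set" where
  "edge_int G j = (if j \<in> intE G then {ea G j<..<eb G j}
                   else if erho G j = -1 then {ec G j<..} else {..<ec G j})"

definition endpts :: "mgraph \<Rightarrow> nat \<Rightarrow> nat set" where
  "endpts G j = (if j \<in> intE G then {eini G j, eter G j} else {evx G j})"

text \<open>Coordinate labels (j,v) of the space G (edge by edge, initial vertex first) and of the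
vertex space F (vertex by vertex, then by edge order).\<close>

definition labG :: "mgraph \<Rightarrow> (nat \<times> nat) list" where
  "labG G = concat (map (\<lambda>j. if j \<in> intE G then [(j, eini G j), (j, eter G j)] else [(j, evx G j)])
                       [0..<nE G])"

definition labF :: "mgraph \<Rightarrow> (nat \<times> nat) list" where
  "labF G = concat (map (\<lambda>v. map (\<lambda>j. (j, v)) (filter (\<lambda>j. v \<in> endpts G j) [0..<nE G])) [0..<nV G])"

type_synonym cvec = "nat \<Rightarrow> complex"

text \<open>Finite-dimensional coordinate space C^n, as vectors with zero entries beyond n.\<close>
definition vspace :: "nat \<Rightarrow> cvec set" where
  "vspace n = {f. \<forall>p\<ge>n. f p = 0}"

definition linear_relation :: "nat \<Rightarrow> (cvec \<times> cvec) set \<Rightarrow> bool" where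
  "linear_relation n L \<longleftrightarrow> L \<subseteq> vspace n \<times> vspace n \<and> (\<lambda>_. 0, \<lambda>_. 0) \<in> L \<and>
     (\<forall>x\<in>L. \<forall>y\<in>L. ((\<lambda>p. fst x p + fst y p), (\<lambda>p. snd x p + snd y p)) \<in> L) \<and>
     (\<forall>c::complex. \<forall>x\<in>L. ((\<lambda>p. c * fst x p), (\<lambda>p. c * snd x p)) \<in> L)"

definition endpt_pt :: "mgraph \<Rightarrow> nat \<Rightarrow> nat \<Rightarrow> real" where
  "endpt_pt G j v = (if j \<in> intE G then (if v = eini G j then ea G j else eb G j) else ec G j)"

definition gamma2_coef :: "mgraph \<Rightarrow> nat \<Rightarrow> nat \<Rightarrow> complex" where
  "gamma2_coef G j v = (if j \<in> intE G then (if v = eini G j then \<i> else - \<i>)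
                        else - \<i> * complex_of_real (erho G j))"

definition VC_coef :: "mgraph \<Rightarrow> nat \<Rightarrow> nat \<Rightarrow> complex" where
  "VC_coef G j v = (if j \<in> intE G then (if v = eini G j then \<i> else - \<i>)
                    else - \<i> * complex_of_real (erho G j))"

type_synonym gfun = "nat \<Rightarrow> real \<Rightarrow> complex \<times> complex"

definition Gamma1 :: "mgraph \<Rightarrow> gfun \<Rightarrow> cvec" where
  "Gamma1 G \<Phi> = (\<lambda>q. if q < length (labG G)
      then (case labG G ! q of (j, v) \<Rightarrow> fst (\<Phi> j (endpt_pt G j v))) else 0)"

definition Gamma2 :: "mgraph \<Rightarrow> gfun \<Rightarrow> cvec" where
  "Gamma2 G \<Phi> = (\<lambda>q. if q < length (labG G)
      then (case labG G ! q of (j, v) \<Rightarrow> gamma2_coef G j v * snd (\<Phi> j (endpt_pt G j v))) else 0)"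

definition VC :: "mgraph \<Rightarrow> cvec \<Rightarrow> cvec" where
  "VC G \<omega> = (\<lambda>q. if q < length (labG G)
      then (case labG G ! q of (j, v) \<Rightarrow> VC_coef G j v * cnj (\<omega> q)) else 0)"

definition Wm :: "mgraph \<Rightarrow> cvec \<Rightarrow> cvec" where
  "Wm G g = (\<lambda>p. if p < length (labF G)
      then g (THE q. q < length (labG G) \<and> labG G ! q = labF G ! p) else 0)"

definition Winv :: "mgraph \<Rightarrow> cvec \<Rightarrow> cvec" where
  "Winv G f = (\<lambda>q. if q < length (labG G)
      then f (THE p. p < length (labF G) \<and> labF G ! p = labG G ! q) else 0)"

definition LambdaC :: "mgraph \<Rightarrow> (cvec \<times> cvec) set \<Rightarrow> (cvec \<times> cvec) set" where
  "LambdaC G L = {(VC G (Winv G f'), VC G (Winv G f)) | f f'. (f, f') \<in> L}"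

text \<open>L^2 on an interval, and H^1 (via the absolutely continuous representative, continuous
up to the finite endpoints, with L^2 derivative g).\<close>
definition L2_on :: "real set \<Rightarrow> (real \<Rightarrow> complex \<times> complex) \<Rightarrow> bool" where
  "L2_on S f \<longleftrightarrow> (\<lambda>x. indicator S x *\<^sub>R f x) \<in> borel_measurable lborel \<and>
                  integrable lborel (\<lambda>x. indicator S x * (norm (f x))\<^sup>2)"

definition H1_with_deriv :: "real set \<Rightarrow> (real \<Rightarrow> complex \<times> complex) \<Rightarrow> (real \<Rightarrow> complex \<times> complex) \<Rightarrow> bool" where
  "H1_with_deriv S f g \<longleftrightarrow> L2_on S f \<and> L2_on S g \<and> continuous_on (closure S) f \<and>
     (\<forall>x\<in>closure S. \<forall>y\<in>closure S. x \<le> y \<longrightarrow> (g has_integral (f y - f x)) {x..y})"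

text \<open>Charge conjugation C and the Dirac expression -i sigma1 phi' + m sigma3 phi.\<close>
definition Cop :: "gfun \<Rightarrow> gfun" where
  "Cop \<Phi> = (\<lambda>j x. (cnj (snd (\<Phi> j x)), cnj (fst (\<Phi> j x))))"

definition dirac_expr :: "real \<Rightarrow> complex \<times> complex \<Rightarrow> complex \<times> complex \<Rightarrow> complex \<times> complex" where
  "dirac_expr m \<phi> g = (- \<i> * snd g + complex_of_real m * fst \<phi>,
                        - \<i> * fst g - complex_of_real m * snd \<phi>)"

text \<open>Graph of the restriction of D^max to {Phi in H1 : bc (Gamma1 Phi) (Gamma2 Phi)};
the image is determined up to a.e. equality on each edge.\<close>
definition D_graph :: "mgraph \<Rightarrow> real \<Rightarrow> (cvec \<Rightarrow> cvec \<Rightarrow> bool) \<Rightarrow> (gfun \<times> gfun) set" where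
  "D_graph G m bc = {(\<Phi>, \<Psi>).
     (\<forall>j<nE G. L2_on (edge_int G j) (\<Psi> j) \<and>
        (\<exists>g. H1_with_deriv (edge_int G j) (\<Phi> j) g \<and>
             (AE x in lborel. x \<in> edge_int G j \<longrightarrow> \<Psi> j x = dirac_expr m (\<Phi> j x) (g x)))) \<and>
     bc (Gamma1 G \<Phi>) (Gamma2 G \<Phi>)}"

definition D_LambdaW :: "mgraph \<Rightarrow> real \<Rightarrow> (cvec \<times> cvec) set \<Rightarrow> (gfun \<times> gfun) set" where
  "D_LambdaW G m L = D_graph G m (\<lambda>x y. (Wm G x, Wm G y) \<in> L)"

definition D_LambdaC :: "mgraph \<Rightarrow> real \<Rightarrow> (cvec \<times> cvec) set \<Rightarrow> (gfun \<times> gfun) set" where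
  "D_LambdaC G m L = D_graph G m (\<lambda>x y. (x, y) \<in> LambdaC G L)"

end

theory Submission
  imports Defs
begin

text \<open>Pointwise, C is the map \<open>(a, b) \<mapsto> (cnj b, cnj a)\<close>, a real-linear isometry of \<open>\<complex>\<^sup>2\<close>
that anticommutes with the Dirac expression (m being real). Hence \<open>\<Phi> \<mapsto> C\<Phi>\<close> preserves
\<open>L\<^sup>2\<close> and \<open>H\<^sup>1\<close> edgewise and \<open>D\<^sup>m\<^sup>a\<^sup>x C\<Phi> = - C D\<^sup>m\<^sup>a\<^sup>x \<Phi>\<close>. On boundary values C exchanges the two
traces up to the antilinear involution \<open>V\<^sub>C\<close>: \<open>\<Gamma>\<^sup>1 C\<Phi> = V\<^sub>C \<Gamma>\<^sup>2 \<Phi>\<close> and \<open>\<Gamma>\<^sup>2 C\<Phi> = V\<^sub>C \<Gamma>\<^sup>1 \<Phi>\<close>.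
Since W is a bijective relabelling of coordinates, \<open>(\<Gamma>\<^sup>1 C\<Phi>, \<Gamma>\<^sup>2 C\<Phi>) \<in> \<Lambda>\<^sub>C\<close> is then
equivalent to \<open>(W\<Gamma>\<^sup>1\<Phi>, W\<Gamma>\<^sup>2\<Phi>) \<in> \<Lambda>\<close>.\<close>

definition charge_conj :: "complex \<times> complex \<Rightarrow> complex \<times> complex" where
  "charge_conj z = (cnj (snd z), cnj (fst z))"

lemma charge_conj_involutive [simp]: "charge_conj (charge_conj z) = z"
  by (simp add: charge_conj_def)

lemma charge_conj_minus [simp]: "charge_conj (- z) = - charge_conj z"
  by (simp add: charge_conj_def)

lemma norm_charge_conj [simp]: "norm (charge_conj z) = norm z"
  by (simp add: charge_conj_def norm_prod_def add.commute)

lemma bounded_linear_charge_conj: "bounded_linear charge_conj"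
  unfolding charge_conj_def
  by (intro bounded_linear_Pair bounded_linear_compose[OF bounded_linear_cnj]
        bounded_linear_fst bounded_linear_snd)

lemma dirac_expr_charge_conj:
  "dirac_expr m (charge_conj \<phi>) (charge_conj g) = - charge_conj (dirac_expr m \<phi> g)"
  by (simp add: charge_conj_def dirac_expr_def)

lemma Cop_eq_charge_conj: "Cop \<Phi> j = (\<lambda>x. charge_conj (\<Phi> j x))"
  by (simp add: Cop_def charge_conj_def)

lemma L2_on_isometry:
  assumes T: "bounded_linear T" and norm_T: "\<And>z. norm (T z) = norm z" and f: "L2_on S f"
  shows "L2_on S (\<lambda>x. T (f x))"
proof -
  interpret T: bounded_linear T by (rule T)
  have "(\<lambda>x. indicator S x *\<^sub>R f x) \<in> borel_measurable lborel"
    using f by (simp add: L2_on_def)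
  then have "(\<lambda>x. T (indicator S x *\<^sub>R f x)) \<in> borel_measurable lborel"
    by (rule borel_measurable_continuous_on[OF T.continuous_on[OF continuous_on_id]])
  then show ?thesis
    using f by (simp add: L2_on_def norm_T T.scale)
qed

lemma H1_with_deriv_isometry:
  assumes T: "bounded_linear T" and norm_T: "\<And>z. norm (T z) = norm z"
    and f: "H1_with_deriv S f g"
  shows "H1_with_deriv S (\<lambda>x. T (f x)) (\<lambda>x. T (g x))"
proof -
  interpret T: bounded_linear T by (rule T)
  have "((\<lambda>x. T (g x)) has_integral (T (f y) - T (f x))) {x..y}"
    if "x \<in> closure S" "y \<in> closure S" "x \<le> y" for x y
    using has_integral_linear[OF _ T, of g "f y - f x" "{x..y}"] f that
    by (auto simp: H1_with_deriv_def T.diff comp_def)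
  then show ?thesis
    using f L2_on_isometry[OF T norm_T]
    by (auto simp: H1_with_deriv_def intro!: T.continuous_on)
qed

definition dirac_edge_solution ::
    "real set \<Rightarrow> real \<Rightarrow> (real \<Rightarrow> complex \<times> complex) \<Rightarrow> (real \<Rightarrow> complex \<times> complex) \<Rightarrow> bool" where
  "dirac_edge_solution S m \<phi> \<psi> \<longleftrightarrow> L2_on S \<psi> \<and>
     (\<exists>g. H1_with_deriv S \<phi> g \<and> (AE x in lborel. x \<in> S \<longrightarrow> \<psi> x = dirac_expr m (\<phi> x) (g x)))"

lemma D_graph_iff:
  "(\<Phi>, \<Psi>) \<in> D_graph G m bc \<longleftrightarrow>
     (\<forall>j<nE G. dirac_edge_solution (edge_int G j) m (\<Phi> j) (\<Psi> j)) \<and> bc (Gamma1 G \<Phi>) (Gamma2 G \<Phi>)"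
  by (simp add: D_graph_def dirac_edge_solution_def)

lemma dirac_edge_solution_charge_conj:
  assumes "dirac_edge_solution S m \<phi> \<psi>"
  shows "dirac_edge_solution S m (\<lambda>x. charge_conj (\<phi> x)) (\<lambda>x. - charge_conj (\<psi> x))"
proof -
  obtain g where g: "H1_with_deriv S \<phi> g"
    and eq: "AE x in lborel. x \<in> S \<longrightarrow> \<psi> x = dirac_expr m (\<phi> x) (g x)"
    using assms by (auto simp: dirac_edge_solution_def)
  have "L2_on S (\<lambda>x. - charge_conj (\<psi> x))"
    using assms bounded_linear_minus[OF bounded_linear_charge_conj]
    by (auto simp: dirac_edge_solution_def intro: L2_on_isometry)
  moreover have "H1_with_deriv S (\<lambda>x. charge_conj (\<phi> x)) (\<lambda>x. charge_conj (g x))"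
    using H1_with_deriv_isometry[OF bounded_linear_charge_conj _ g] by simp
  moreover have "AE x in lborel. x \<in> S \<longrightarrow>
      - charge_conj (\<psi> x) = dirac_expr m (charge_conj (\<phi> x)) (charge_conj (g x))"
    using eq by eventually_elim (simp add: dirac_expr_charge_conj)
  ultimately show ?thesis
    by (auto simp: dirac_edge_solution_def)
qed

lemma dirac_edge_solution_charge_conj_iff:
  "dirac_edge_solution S m (\<lambda>x. charge_conj (\<phi> x)) \<psi> \<longleftrightarrow>
   dirac_edge_solution S m \<phi> (\<lambda>x. - charge_conj (\<psi> x))"
  using dirac_edge_solution_charge_conj[of S m "\<lambda>x. charge_conj (\<phi> x)" \<psi>]
    dirac_edge_solution_charge_conj[of S m \<phi> "\<lambda>x. - charge_conj (\<psi> x)"]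
  by auto

lemma distinct_concat_map_keyed:
  assumes "distinct xs"
    and "\<And>j. j \<in> set xs \<Longrightarrow> distinct (h j) \<and> (\<forall>p\<in>set (h j). key p = j)"
  shows "distinct (concat (map h xs))"
  using assms
proof (induction xs)
  case Nil
  then show ?case by simp
next
  case (Cons a xs)
  have "set (h a) \<inter> set (concat (map h xs)) = {}"
  proof (rule ccontr)
    assume "set (h a) \<inter> set (concat (map h xs)) \<noteq> {}"
    then obtain p b where "p \<in> set (h a)" "b \<in> set xs" "p \<in> set (h b)"
      by auto
    then have "key p = a" "key p = b"
      using Cons.prems(2) by auto
    with \<open>b \<in> set xs\<close> Cons.prems(1) show False
      by auto
  qed
  then show ?case
    using Cons by auto
qed

lemma set_labG: "set (labG G) = {(j, v). j < nE G \<and> v \<in> endpts G j}"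
  unfolding labG_def endpts_def by (auto split: if_splits)

lemma set_labF: "set (labF G) = {(j, v). v < nV G \<and> j < nE G \<and> v \<in> endpts G j}"
  unfolding labF_def by auto

lemma set_labF_eq_set_labG: "valid_graph G \<Longrightarrow> set (labF G) = set (labG G)"
  unfolding set_labF set_labG valid_graph_def endpts_def by (auto split: if_splits)

lemma distinct_labG: "valid_graph G \<Longrightarrow> distinct (labG G)"
  unfolding labG_def
  by (rule distinct_concat_map_keyed[where key = fst]) (auto simp: valid_graph_def)

lemma distinct_labF: "distinct (labF G)"
  unfolding labF_def
  by (rule distinct_concat_map_keyed[where key = snd]) (auto simp: distinct_map inj_on_def)

definition permute_coords :: "'a list \<Rightarrow> 'a list \<Rightarrow> cvec \<Rightarrow> cvec" where
  "permute_coords xs ys g = (\<lambda>p. if p < length ys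
      then g (THE q. q < length xs \<and> xs ! q = ys ! p) else 0)"

lemma the_index_in_distinct:
  assumes "distinct xs" "x \<in> set xs"
  shows "(THE q. q < length xs \<and> xs ! q = x) < length xs \<and> xs ! (THE q. q < length xs \<and> xs ! q = x) = x"
proof (rule theI')
  show "\<exists>!q. q < length xs \<and> xs ! q = x"
    using assms by (auto simp: in_set_conv_nth nth_eq_iff_index_eq)
qed

lemma permute_coords_inverse:
  assumes "distinct xs" "distinct ys" "set xs = set ys" "g \<in> vspace (length xs)"
  shows "permute_coords ys xs (permute_coords xs ys g) = g"
proof
  fix q
  show "permute_coords ys xs (permute_coords xs ys g) q = g q"
  proof (cases "q < length xs")
    case True
    define p where "p = (THE p. p < length ys \<and> ys ! p = xs ! q)"
    have p: "p < length ys" "ys ! p = xs ! q"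
      using the_index_in_distinct[OF assms(2), of "xs ! q"] assms(3) True nth_mem
      unfolding p_def by auto
    have "(THE q'. q' < length xs \<and> xs ! q' = ys ! p) = q"
      using assms(1) True by (auto simp: p(2) nth_eq_iff_index_eq)
    then show ?thesis
      using True p by (simp add: permute_coords_def p_def[symmetric])
  next
    case False
    then show ?thesis
      using assms(4) by (simp add: permute_coords_def vspace_def)
  qed
qed

lemma Wm_eq_permute_coords: "Wm G = permute_coords (labG G) (labF G)"
  by (simp add: Wm_def permute_coords_def fun_eq_iff)

lemma Winv_eq_permute_coords: "Winv G = permute_coords (labF G) (labG G)"
  by (simp add: Winv_def permute_coords_def fun_eq_iff)

lemma Winv_Wm: "valid_graph G \<Longrightarrow> g \<in> vspace (length (labG G)) \<Longrightarrow> Winv G (Wm G g) = g"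
  unfolding Wm_eq_permute_coords Winv_eq_permute_coords
  by (rule permute_coords_inverse) (simp_all add: distinct_labG distinct_labF set_labF_eq_set_labG)

lemma Wm_Winv: "valid_graph G \<Longrightarrow> f \<in> vspace (length (labF G)) \<Longrightarrow> Wm G (Winv G f) = f"
  unfolding Wm_eq_permute_coords Winv_eq_permute_coords
  by (rule permute_coords_inverse) (simp_all add: distinct_labG distinct_labF set_labF_eq_set_labG)

lemma Winv_vspace: "Winv G f \<in> vspace (length (labG G))"
  by (simp add: Winv_def vspace_def)

lemma Gamma_vspace:
  "Gamma1 G \<Phi> \<in> vspace (length (labG G))" "Gamma2 G \<Phi> \<in> vspace (length (labG G))"
  by (simp_all add: Gamma1_def Gamma2_def vspace_def)

lemma VC_coef_mult_cnj_gamma2_coef: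
  assumes "valid_graph G" "(j, v) \<in> set (labG G)"
  shows "VC_coef G j v * cnj (gamma2_coef G j v) = 1"
proof -
  have "j \<notin> intE G \<Longrightarrow> erho G j = -1 \<or> erho G j = 1"
    using assms by (auto simp: valid_graph_def set_labG)
  then show ?thesis
    by (auto simp: VC_coef_def gamma2_coef_def)
qed

lemma VC_involutive:
  assumes "valid_graph G" "w \<in> vspace (length (labG G))"
  shows "VC G (VC G w) = w"
proof
  fix q
  show "VC G (VC G w) q = w q"
  proof (cases "q < length (labG G)")
    case True
    obtain j v where jv: "labG G ! q = (j, v)" by fastforce
    with True have "(j, v) \<in> set (labG G)" by (metis nth_mem)
    from VC_coef_mult_cnj_gamma2_coef[OF assms(1) this] show ?thesis
      using True jv by (simp add: VC_def gamma2_coef_def VC_coef_def)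
  next
    case False
    then show ?thesis
      using assms(2) by (simp add: VC_def vspace_def)
  qed
qed

lemma Gamma1_Cop:
  assumes "valid_graph G"
  shows "Gamma1 G (Cop \<Phi>) = VC G (Gamma2 G \<Phi>)"
proof
  fix q
  show "Gamma1 G (Cop \<Phi>) q = VC G (Gamma2 G \<Phi>) q"
  proof (cases "q < length (labG G)")
    case True
    obtain j v where jv: "labG G ! q = (j, v)" by fastforce
    with True have "(j, v) \<in> set (labG G)" by (metis nth_mem)
    from VC_coef_mult_cnj_gamma2_coef[OF assms this] show ?thesis
      using True jv by (simp add: VC_def Gamma1_def Gamma2_def Cop_def)
  next
    case False
    then show ?thesis by (simp add: VC_def Gamma1_def)
  qed
qed

lemma Gamma2_Cop: "Gamma2 G (Cop \<Phi>) = VC G (Gamma1 G \<Phi>)"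
  by (auto simp: VC_def Gamma1_def Gamma2_def Cop_def VC_coef_def gamma2_coef_def split: prod.splits)

lemma Gamma_Cop_in_LambdaC_iff:
  assumes "valid_graph G" "L \<subseteq> vspace (length (labF G)) \<times> vspace (length (labF G))"
  shows "(Gamma1 G (Cop \<Phi>), Gamma2 G (Cop \<Phi>)) \<in> LambdaC G L \<longleftrightarrow>
         (Wm G (Gamma1 G \<Phi>), Wm G (Gamma2 G \<Phi>)) \<in> L"
proof
  assume "(Gamma1 G (Cop \<Phi>), Gamma2 G (Cop \<Phi>)) \<in> LambdaC G L"
  then obtain f f' where ff': "(f, f') \<in> L"
    and "VC G (Gamma1 G \<Phi>) = VC G (Winv G f)" "VC G (Gamma2 G \<Phi>) = VC G (Winv G f')"
    unfolding LambdaC_def Gamma1_Cop[OF assms(1)] Gamma2_Cop by blast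
  then have "Gamma1 G \<Phi> = Winv G f" "Gamma2 G \<Phi> = Winv G f'"
    by (metis VC_involutive[OF assms(1)] Gamma_vspace Winv_vspace)+
  moreover have "f \<in> vspace (length (labF G))" "f' \<in> vspace (length (labF G))"
    using ff' assms(2) by auto
  ultimately show "(Wm G (Gamma1 G \<Phi>), Wm G (Gamma2 G \<Phi>)) \<in> L"
    using ff' by (simp add: Wm_Winv[OF assms(1)])
next
  assume "(Wm G (Gamma1 G \<Phi>), Wm G (Gamma2 G \<Phi>)) \<in> L"
  then show "(Gamma1 G (Cop \<Phi>), Gamma2 G (Cop \<Phi>)) \<in> LambdaC G L"
    unfolding LambdaC_def Gamma1_Cop[OF assms(1)] Gamma2_Cop
    by (intro CollectI exI[of _ "Wm G (Gamma1 G \<Phi>)"] exI[of _ "Wm G (Gamma2 G \<Phi>)"])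
      (simp add: Winv_Wm[OF assms(1)] Gamma_vspace)
qed

theorem theorem4p20:
  fixes G :: mgraph and m :: real and L :: "(cvec \<times> cvec) set"
  assumes "valid_graph G" and "m \<ge> 0"
    and "linear_relation (length (labF G)) L"
  shows "\<forall>\<Phi> \<Psi>. (Cop \<Phi>, \<Psi>) \<in> D_LambdaC G m L \<longleftrightarrow> (\<Phi>, \<lambda>j x. - Cop \<Psi> j x) \<in> D_LambdaW G m L"
proof (intro allI)
  fix \<Phi> \<Psi> :: gfun
  have "L \<subseteq> vspace (length (labF G)) \<times> vspace (length (labF G))"
    using assms(3) by (simp add: linear_relation_def)
  note boundary = Gamma_Cop_in_LambdaC_iff[OF assms(1) this, of \<Phi>]
  show "(Cop \<Phi>, \<Psi>) \<in> D_LambdaC G m L \<longleftrightarrow> (\<Phi>, \<lambda>j x. - Cop \<Psi> j x) \<in> D_LambdaW G m L"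
    unfolding D_LambdaC_def D_LambdaW_def D_graph_iff boundary Cop_eq_charge_conj
    by (simp add: dirac_edge_solution_charge_conj_iff)
qed

end
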